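(* Let $\Sigma$ be a finite totally ordered alphabet, let $W = a_1 a_2 \cdots a_n \in \Sigma^+$, and let $W = L_1 L_2 \cdots L_k$ be its Lyndon factorization. Let $1 \le r \le s \le k$ and let $u = L_r L_{r+1} \cdots L_s$, occupying positions $first(u), \dots, last(u)$ of $W$. Then the sorting of the suffixes of $u$ is compatible with the sorting of the suffixes of $W$; that is, for all indices $i, j$ with $first(u) \le i < j \le last(u)$, $$W[i, last(u)] < W[j, last(u)] \iff W[i,n] < W[j,n],$$ where $<$ denotes the (strict) lexicographic order on $\Sigma^*$.
   Context: For a word $W = a_1\cdots a_n$, $W[i,j] = a_i\cdots a_j$. The lexicographic order on $\Sigma^*$ is the usual one induced by the order of $\Sigma$, in which a proper prefix is smaller than the longer word. Two words $x,y$ are conjugate if $x = pq$, $y = qp$ for some words $p,q$. A Lyndon word is a nonempty primitive word that is strictly smaller (lexicographically) than all its other conjugates. The Lyndon factorization of $W \in \Sigma^+$ is the unique factorization $W = L_1 L_2\cdots L_k$ into Lyndon words with $L_1 \ge L_2 \ge \cdots \ge L_k$ lexicographically. For a factor $u$ of $W$ occurring at a fixed set of positions, $first(u)$ and $last(u)$ denote the positions in $W$ of its first and last letter; $W[i, last(u)]$ is the local suffix of $u$ at position $i$ and $W[i,n]$ is the global suffix of $W$ at position $i$. *)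

theory Defs
  imports Main
begin

text \<open>Words are lists; positions are 1-based as in the paper.\<close>

definition lex_less :: "'a::linorder list \<Rightarrow> 'a list \<Rightarrow> bool" where
  "lex_less x y \<longleftrightarrow>
     (\<exists>p. p \<noteq> [] \<and> y = x @ p) \<or>
     (\<exists>p a b s t. a < b \<and> x = p @ a # s \<and> y = p @ b # t)"

definition conjugate :: "'a list \<Rightarrow> 'a list \<Rightarrow> bool" where
  "conjugate x y \<longleftrightarrow> (\<exists>p q. x = p @ q \<and> y = q @ p)"

definition primitive :: "'a list \<Rightarrow> bool" where
  "primitive w \<longleftrightarrow> w \<noteq> [] \<and> \<not> (\<exists>v k. k \<ge> 2 \<and> w = concat (replicate k v))"

definition lyndon :: "'a::linorder list \<Rightarrow> bool" where
  "lyndon w \<longleftrightarrow> w \<noteq> [] \<and> primitive w \<and>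
     (\<forall>y. conjugate w y \<and> y \<noteq> w \<longrightarrow> lex_less w y)"

definition lyndon_factorization :: "'a::linorder list \<Rightarrow> 'a list list \<Rightarrow> bool" where
  "lyndon_factorization W Ls \<longleftrightarrow> concat Ls = W \<and> (\<forall>L\<in>set Ls. lyndon L) \<and>
     sorted_wrt (\<lambda>x y. y = x \<or> lex_less y x) Ls"

text \<open>W[i,j] = a_i ... a_j (1-based, inclusive).\<close>
definition factor :: "'a list \<Rightarrow> nat \<Rightarrow> nat \<Rightarrow> 'a list" where
  "factor W i j = take (Suc j - i) (drop (i - 1) W)"

end

theory Submission
  imports Defs
begin

text \<open>Write \<open>U = L\<^sub>1 \<cdots> L\<^sub>s\<close> and \<open>Q = L\<^sub>s\<^sub>+\<^sub>1 \<cdots> L\<^sub>k\<close>, so that the local suffixes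
  of \<open>u\<close> are suffixes of \<open>U\<close> and the corresponding global suffixes are obtained by appending
  \<open>Q\<close>; only the right end of \<open>u\<close> matters. Appending \<open>Q\<close> to two suffixes \<open>x\<close>, \<open>y\<close> of \<open>U\<close>
  with \<open>y\<close> shorter can only change their order when \<open>x = y v\<close>, and then the question is
  whether \<open>Q < v Q\<close>. So it suffices that \<open>Q\<close> is smaller than every global suffix starting
  inside \<open>U\<close>. This follows by induction over the factors from two facts: a proper suffix of a
  Lyndon word \<open>L\<close> exceeds \<open>L\<close> at a mismatch position, and a product of Lyndon words
  \<open>\<le> L\<close> is smaller than every word that exceeds \<open>L\<close> at a mismatch position.\<close>

lemma lex_less_eq_lexordp: "lex_less = ord_class.lexordp"
  by (intro ext) (auto simp: lex_less_def lexordp_iff neq_Nil_conv)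

definition mismatch_less :: "'a::ord list \<Rightarrow> 'a list \<Rightarrow> bool" where
  "mismatch_less x y \<longleftrightarrow> (\<exists>p a b s t. a < b \<and> x = p @ a # s \<and> y = p @ b # t)"

lemma lex_less_iff_mismatch_less:
  "lex_less x y \<longleftrightarrow> (\<exists>v. v \<noteq> [] \<and> y = x @ v) \<or> mismatch_less x y"
  unfolding lex_less_def mismatch_less_def ..

lemma mismatch_less_append: "mismatch_less x y \<Longrightarrow> mismatch_less (x @ u) (y @ v)"
  unfolding mismatch_less_def by fastforce

lemma mismatch_less_imp_lex_less: "mismatch_less x y \<Longrightarrow> lex_less x y"
  by (simp add: lex_less_iff_mismatch_less)

lemma lex_less_imp_mismatch_less:
  "lex_less x y \<Longrightarrow> length y \<le> length x \<Longrightarrow> mismatch_less x y"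
  by (auto simp: lex_less_iff_mismatch_less)

lemma mismatch_less_iff_nth:
  "mismatch_less x y \<longleftrightarrow>
     (\<exists>i. i < length x \<and> i < length y \<and> take i x = take i y \<and> x ! i < y ! i)"
proof
  assume "mismatch_less x y"
  then obtain p a b s t where "a < b" "x = p @ a # s" "y = p @ b # t"
    unfolding mismatch_less_def by blast
  then show "\<exists>i. i < length x \<and> i < length y \<and> take i x = take i y \<and> x ! i < y ! i"
    by (intro exI[of _ "length p"]) simp
next
  assume "\<exists>i. i < length x \<and> i < length y \<and> take i x = take i y \<and> x ! i < y ! i"
  then obtain i where i: "i < length x" "i < length y" "take i x = take i y" "x ! i < y ! i"
    by blast
  then have "x = take i x @ x ! i # drop (Suc i) x" "y = take i x @ y ! i # drop (Suc i) y"
    by (metis id_take_nth_drop)+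
  with i(4) show "mismatch_less x y"
    unfolding mismatch_less_def by blast
qed

lemma mismatch_less_trans:
  fixes x y z :: "'a::order list"
  assumes "mismatch_less x y" "mismatch_less y z"
  shows "mismatch_less x z"
proof -
  obtain i where i: "i < length x" "i < length y" "take i x = take i y" "x ! i < y ! i"
    using assms(1) by (auto simp: mismatch_less_iff_nth)
  obtain j where j: "j < length y" "j < length z" "take j y = take j z" "y ! j < z ! j"
    using assms(2) by (auto simp: mismatch_less_iff_nth)
  have "take (min i j) x = take (min i j) z"
    using i(3) j(3) by (metis min.commute take_take)
  moreover have "x ! min i j < z ! min i j"
  proof (cases i j rule: linorder_cases)
    case less
    then show ?thesis using i(4) j(3) by (metis min.strict_order_iff nth_take order.strict_trans2 order.refl)
  next
    case equal
    then show ?thesis using i(4) j(4) by auto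
  next
    case greater
    then show ?thesis using i(3) j(4) by (metis min.strict_order_iff nth_take min.commute)
  qed
  ultimately show ?thesis
    using i j by (auto simp: mismatch_less_iff_nth intro!: exI[of _ "min i j"])
qed

lemma mismatch_less_append_leftD:
  assumes "mismatch_less (u @ x) z"
  shows "mismatch_less u z \<or> (\<exists>z'. z = u @ z' \<and> mismatch_less x z')"
proof -
  obtain p a b s t where ab: "a < b" "u @ x = p @ a # s" "z = p @ b # t"
    using assms unfolding mismatch_less_def by blast
  from ab(2) consider us where "u = p @ us" "us @ x = a # s" | us where "u @ us = p" "x = us @ a # s"
    by (auto simp: append_eq_append_conv2)
  then show ?thesis
  proof cases
    case (1 us)
    show ?thesis
    proof (cases us)
      case Nil
      then show ?thesis using 1 ab unfolding mismatch_less_def by (metis append.left_neutral append_Nil2)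
    next
      case (Cons c us')
      then have "u = p @ a # us'" using 1 by simp
      then have "mismatch_less u z" using ab(1,3) unfolding mismatch_less_def by blast
      then show ?thesis ..
    qed
  next
    case (2 us)
    then show ?thesis using ab unfolding mismatch_less_def by (metis append.assoc)
  qed
qed

lemma mismatch_less_append_rightD:
  assumes "mismatch_less x (u @ z)"
  shows "mismatch_less x u \<or> (\<exists>x'. x = u @ x' \<and> mismatch_less x' z)"
proof -
  obtain p a b s t where ab: "a < b" "x = p @ a # s" "u @ z = p @ b # t"
    using assms unfolding mismatch_less_def by blast
  from ab(3) consider us where "u = p @ us" "us @ z = b # t" | us where "u @ us = p" "z = us @ b # t"
    by (auto simp: append_eq_append_conv2)
  then show ?thesis
  proof cases
    case (1 us)
    show ?thesis
    proof (cases us)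
      case Nil
      then show ?thesis using 1 ab unfolding mismatch_less_def by (metis append.left_neutral append_Nil2)
    next
      case (Cons c us')
      then have "u = p @ b # us'" using 1 by simp
      then have "mismatch_less x u" using ab(1,2) unfolding mismatch_less_def by blast
      then show ?thesis ..
    qed
  next
    case (2 us)
    then show ?thesis using ab unfolding mismatch_less_def by (metis append.assoc)
  qed
qed

lemma lyndon_nonempty: "lyndon L \<Longrightarrow> L \<noteq> []"
  by (simp add: lyndon_def)

lemma lyndon_lex_less_rotation:
  assumes "lyndon (x @ y)" "x \<noteq> []" "y \<noteq> []"
  shows "lex_less (x @ y) (y @ x)"
proof -
  have "y @ x \<noteq> x @ y"
  proof
    assume "y @ x = x @ y"
    then obtain n v where "n > 1" "concat (replicate n v) = x @ y"
      using comm_append_is_replicate[OF assms(2,3)] by metis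
    with assms(1) show False
      unfolding lyndon_def primitive_def by (metis Suc_leI one_add_one plus_1_eq_Suc)
  qed
  moreover have "conjugate (x @ y) (y @ x)"
    unfolding conjugate_def by blast
  ultimately show ?thesis
    using assms(1) unfolding lyndon_def by blast
qed

lemma lyndon_mismatch_less_proper_suffix:
  assumes lyndon: "lyndon (u @ w)" and "u \<noteq> []" "w \<noteq> []"
  shows "mismatch_less (u @ w) w"
proof -
  have "mismatch_less (u @ w) (w @ u)"
    using lyndon_lex_less_rotation[OF assms] by (rule lex_less_imp_mismatch_less) simp
  then consider "mismatch_less (u @ w) w" | v where "u @ w = w @ v" "mismatch_less v u"
    using mismatch_less_append_rightD by blast
  then show ?thesis
  proof cases
    case 2
    \<comment> \<open>then \<open>w\<close> is a border of \<open>u @ w\<close>, and the rotation \<open>v @ w\<close> would be smaller than it\<close>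
    have "v \<noteq> []"
      using 2(1) \<open>u \<noteq> []\<close> by (metis append.right_neutral append_self_conv2 list.size(3) length_append)
    with 2(1) lyndon \<open>w \<noteq> []\<close> have "lex_less (u @ w) (v @ w)"
      by (metis lyndon_lex_less_rotation)
    moreover have "lex_less (v @ w) (u @ w)"
      using 2(2) by (intro mismatch_less_imp_lex_less mismatch_less_append)
    ultimately show ?thesis
      unfolding lex_less_eq_lexordp using lexordp_antisym by blast
  qed
qed

lemma concat_lex_less_if_mismatch_less:
  assumes "lyndon L" and "\<forall>M\<in>set Rs. M = L \<or> lex_less M L" and "mismatch_less L z"
  shows "lex_less (concat Rs) (z @ X)"
  using assms(2,3)
proof (induction Rs arbitrary: z)
  case Nil
  then show ?case
    unfolding lex_less_def mismatch_less_def by auto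
next
  case (Cons M Rs)
  have "M = L \<or> lex_less M L" and Rs: "\<forall>M\<in>set Rs. M = L \<or> lex_less M L"
    using Cons.prems(1) by simp_all
  then consider "M = L" | "mismatch_less M L" | v where "v \<noteq> []" "L = M @ v"
    using lex_less_iff_mismatch_less by blast
  then show ?case
  proof cases
    case 1
    then show ?thesis
      using Cons.prems(2) by (simp add: mismatch_less_append mismatch_less_imp_lex_less)
  next
    case 2
    then have "mismatch_less M z"
      using Cons.prems(2) by (rule mismatch_less_trans)
    then show ?thesis
      by (simp add: mismatch_less_append mismatch_less_imp_lex_less)
  next
    case (3 v)
    from Cons.prems(2) 3(2) consider "mismatch_less M z" | z' where "z = M @ z'" "mismatch_less v z'"
      using mismatch_less_append_leftD by blast
    then show ?thesis
    proof cases
      case 1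
      then show ?thesis by (simp add: mismatch_less_append mismatch_less_imp_lex_less)
    next
      case (2 z')
      have "L = v \<or> mismatch_less L v"
        using 3 assms(1) lyndon_mismatch_less_proper_suffix by (cases "M = []") auto
      then have "mismatch_less L z'"
        using 2(2) mismatch_less_trans by blast
      then have "lex_less (concat Rs) (z' @ X)"
        using Cons.IH Rs by blast
      then show ?thesis
        using 2(1) by (simp add: lex_less_eq_lexordp lexordp_append_leftI)
    qed
  qed
qed

lemma lex_less_concat_Cons:
  assumes "lyndon L" and "\<forall>M\<in>set Rs. lyndon M \<and> (M = L \<or> lex_less M L)"
  shows "lex_less (concat Rs) (concat (L # Rs))"
  using assms(2)
proof (induction Rs)
  case Nil
  then show ?case
    using lyndon_nonempty[OF assms(1)] by (simp add: lex_less_def)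
next
  case (Cons M Rs)
  then have IH: "lex_less (concat Rs) (L @ concat Rs)" and "lyndon M" "M = L \<or> lex_less M L"
    by simp_all
  then consider "M = L" | "mismatch_less M L" | v where "v \<noteq> []" "L = M @ v"
    using lex_less_iff_mismatch_less by blast
  then show ?case
  proof cases
    case 1
    then show ?thesis
      using IH by (simp add: lex_less_eq_lexordp lexordp_append_leftI)
  next
    case 2
    then show ?thesis
      by (simp add: mismatch_less_append mismatch_less_imp_lex_less)
  next
    case (3 v)
    have "mismatch_less L v"
      using 3 assms(1) lyndon_nonempty[OF \<open>lyndon M\<close>] lyndon_mismatch_less_proper_suffix by blast
    then have "lex_less (concat Rs) (v @ M @ concat Rs)"
      using Cons.prems assms(1) by (intro concat_lex_less_if_mismatch_less) auto
    then show ?thesis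
      using 3(2) by (simp add: lex_less_eq_lexordp lexordp_append_leftI)
  qed
qed

lemma lex_less_suffix_at_factor_boundary:
  assumes "lyndon_factorization (concat (Us @ Rs)) (Us @ Rs)" and "d < length (concat Us)"
  shows "lex_less (concat Rs) (drop d (concat Us) @ concat Rs)"
  using assms
proof (induction Us arbitrary: Rs d rule: rev_induct)
  case Nil
  then show ?case by simp
next
  case (snoc L Us)
  let ?Q = "concat Rs"
  have fact: "lyndon_factorization (concat (Us @ L # Rs)) (Us @ L # Rs)"
    using snoc.prems(1) by simp
  then have "lyndon L" and Rs: "\<forall>M\<in>set Rs. lyndon M \<and> (M = L \<or> lex_less M L)"
    unfolding lyndon_factorization_def by (auto simp: sorted_wrt_append)
  then have Q_less: "lex_less ?Q (L @ ?Q)"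
    using lex_less_concat_Cons by fastforce
  show ?case
  proof (cases "d < length (concat Us)")
    case True
    then have "lex_less (L @ ?Q) (drop d (concat Us) @ L @ ?Q)"
      using snoc.IH fact by fastforce
    with Q_less True show ?thesis
      unfolding lex_less_eq_lexordp by (auto dest: lexordp_trans)
  next
    case False
    define d' where "d' = d - length (concat Us)"
    have drop_eq: "drop d (concat (Us @ [L])) = drop d' L" and "d' < length L"
      using False snoc.prems(2) by (simp_all add: d'_def)
    show ?thesis
    proof (cases "d' = 0")
      case True
      then show ?thesis using drop_eq Q_less by simp
    next
      case False
      have "mismatch_less L (drop d' L)"
        using lyndon_mismatch_less_proper_suffix[of "take d' L" "drop d' L"] \<open>lyndon L\<close> \<open>d' < length L\<close> False
        by (simp add: lyndon_nonempty)
      then show ?thesis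
        using drop_eq \<open>lyndon L\<close> Rs by (simp add: concat_lex_less_if_mismatch_less)
    qed
  qed
qed

lemma lex_less_append_right_iff:
  fixes x y Q :: "'a::linorder list"
  assumes "length y < length x" and "\<And>v. x = y @ v \<Longrightarrow> lex_less Q (v @ Q)"
  shows "lex_less (x @ Q) (y @ Q) \<longleftrightarrow> lex_less x y"
proof
  assume less: "lex_less (x @ Q) (y @ Q)"
  show "lex_less x y"
  proof (rule ccontr)
    assume "\<not> lex_less x y"
    moreover have "x \<noteq> y"
      using assms(1) by auto
    ultimately have "lex_less y x"
      unfolding lex_less_eq_lexordp using lexordp_linear by blast
    then consider v where "v \<noteq> []" "x = y @ v" | "mismatch_less y x"
      unfolding lex_less_iff_mismatch_less by blast
    then have "lex_less (y @ Q) (x @ Q)"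
    proof cases
      case 1
      then show ?thesis
        using assms(2) by (simp add: lex_less_eq_lexordp lexordp_append_leftI)
    qed (simp add: mismatch_less_append mismatch_less_imp_lex_less)
    with less show False
      unfolding lex_less_eq_lexordp using lexordp_antisym by blast
  qed
next
  assume "lex_less x y"
  then show "lex_less (x @ Q) (y @ Q)"
    using assms(1) by (simp add: lex_less_imp_mismatch_less mismatch_less_append mismatch_less_imp_lex_less)
qed

lemma lex_less_drop_append_iff:
  fixes U Q :: "'a::linorder list"
  assumes "\<And>d. d < length U \<Longrightarrow> lex_less Q (drop d U @ Q)" and "i < j" "j \<le> length U"
  shows "lex_less (drop i U @ Q) (drop j U @ Q) \<longleftrightarrow> lex_less (drop i U) (drop j U)"
proof (rule lex_less_append_right_iff)
  fix v
  assume "drop i U = drop j U @ v"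
  then have "v = drop (length U - j + i) U"
    by (metis add.commute append_eq_conv_conj drop_drop length_drop)
  then show "lex_less Q (v @ Q)"
    using assms by simp
qed (use assms in simp)

theorem theorem2:
  fixes W :: "'a::{finite,linorder} list" and Ls :: "'a list list" and r s :: nat
  assumes "W \<noteq> []"
    and "lyndon_factorization W Ls"
    and "1 \<le> r" and "r \<le> s" and "s \<le> length Ls"
  shows "let n = length W;
             first_u = length (concat (take (r - 1) Ls)) + 1;
             last_u = length (concat (take s Ls))
         in \<forall>i j. first_u \<le> i \<and> i < j \<and> j \<le> last_u \<longrightarrow>
              (lex_less (factor W i last_u) (factor W j last_u)
               \<longleftrightarrow> lex_less (factor W i n) (factor W j n))"
proof -
  define U where "U = concat (take s Ls)"
  define Q where "Q = concat (drop s Ls)"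
  have W: "W = U @ Q"
    using assms(2) unfolding lyndon_factorization_def U_def Q_def
    by (metis append_take_drop_id concat_append)
  have "lyndon_factorization (concat (take s Ls @ drop s Ls)) (take s Ls @ drop s Ls)"
    using assms(2) unfolding lyndon_factorization_def by simp
  then have boundary: "\<And>d. d < length U \<Longrightarrow> lex_less Q (drop d U @ Q)"
    unfolding U_def Q_def by (rule lex_less_suffix_at_factor_boundary)
  have local_suffix: "factor W i (length U) = drop (i - 1) U"
    and global_suffix: "factor W i (length W) = drop (i - 1) U @ Q"
    if "1 \<le> i" "i \<le> length U" for i
    using that unfolding factor_def W by simp_all
  show ?thesis
    unfolding Let_def U_def[symmetric]
    using lex_less_drop_append_iff[OF boundary, of "_ - 1" "_ - 1"]
    by (auto simp: local_suffix global_suffix)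
qed

end
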